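(* Let $X$ be a K3 surface over a number field $K$, $\bar X=X\times_K\bar K$ for an algebraic closure $\bar K$, let $\ell>44$ be a prime, and let $G_{\ell,X,K}\subset\mathrm{Aut}_{\mathbb{Z}_\ell}(H^2(\bar X,\mathbb{Z}_\ell))$ be the image of $\mathrm{Gal}(\bar K/K)$ under the $\ell$-adic representation on $H^2(\bar X,\mathbb{Z}_\ell)$ (a free $\mathbb{Z}_\ell$-module of rank $22$). Suppose that a prime $p$ and an element $u\in G_{\ell,X,K}$ satisfy: (i) $\ell$ divides $p-1$; (ii) $u\in\mathrm{Id}+\ell\cdot\mathrm{End}_{\mathbb{Z}_\ell}(H^2(\bar X,\mathbb{Z}_\ell))$; (iii) the characteristic polynomial $P_u(t)=\det(1-tu,H^2(\bar X,\mathbb{Q}_\ell))=1+b_1t+\cdots+b_{22}t^{22}$ lies in $\mathbb{Z}[t]$; (iv) writing $P_u(t)=\prod_{i=1}^{22}(1-\beta_it)$, all $\beta_1,\dots,\beta_{22}$ have the same archimedean absolute value $p$; (v) $b_1$ is divisible by $p$. Then $p^{-1}u$ is a unipotent linear operator on $H^2(\bar X,\mathbb{Q}_\ell)=H^2(\bar X,\mathbb{Z}_\ell)\otimes_{\mathbb{Z}_\ell}\mathbb{Q}_\ell$. In particular, if $u$ is semisimple then $u=p\cdot\mathrm{Id}$.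
   Context: A K3 surface over a field is an (absolutely) irreducible smooth projective surface with trivial canonical sheaf and $H^1(\mathcal{O})=0$. $\mathrm{Id}$ denotes the identity automorphism of $H^2(\bar X,\mathbb{Z}_\ell)$. Condition (iv) means the absolute value is $p$ under every complex embedding of the algebraic numbers $\beta_i$. *)

theory Defs
  imports "Jordan_Normal_Form.Determinant" "HOL-Number_Theory.Cong" Complex_Main
begin

text \<open>A Z_l-linear endomorphism of Z_l^N (N = rank of H^2 = 22, after choosing a
  Z_l-basis) is represented by a compatible system of integer matrices U n,
  U n being the reduction modulo l^n.\<close>

definition zl_matrix :: "nat \<Rightarrow> nat \<Rightarrow> (nat \<Rightarrow> int mat) \<Rightarrow> bool" where
  "zl_matrix l N U \<longleftrightarrow> (\<forall>n. U n \<in> carrier_mat N N) \<and>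
     (\<forall>n i j. i < N \<longrightarrow> j < N \<longrightarrow> [U (Suc n) $$ (i,j) = U n $$ (i,j)] (mod (int l ^ n)))"

definition mat_cong :: "int mat \<Rightarrow> int mat \<Rightarrow> int \<Rightarrow> bool" where
  "mat_cong A B m \<longleftrightarrow> (\<forall>i j. i < dim_row A \<longrightarrow> j < dim_col A \<longrightarrow> [A $$ (i,j) = B $$ (i,j)] (mod m))"

definition det_one_minus_t :: "int mat \<Rightarrow> int poly" where
  "det_one_minus_t A = det (1\<^sub>m (dim_row A) - map_mat (\<lambda>a. [:0, a:]) A)"

text \<open>For P(t) = sum_{k<=N} b_k t^k = prod_{i=1}^N (1 - beta_i t), the beta_i are the
  roots of t^N P(1/t).\<close>
definition recip_poly :: "nat \<Rightarrow> int poly \<Rightarrow> int poly" where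
  "recip_poly N P = (\<Sum>k\<le>N. monom (coeff P k) (N - k))"

end

theory Submission
  imports Defs "HOL-Computational_Algebra.Fundamental_Theorem_Algebra" "Jordan_Normal_Form.Char_Poly"
begin

text \<open>Since u \<equiv> 1 (mod l), P = det(1 - tu) is congruent to (1 - t)^22 modulo l, so
  b_1 \<equiv> -22 (mod l).  The sum of the \<beta>_i is -b_1 = -p c with |c| \<le> 22 by (iv); as p \<equiv> 1
  (mod l) and l > 44 this forces c = -22, and the equality case of the triangle inequality
  gives \<beta>_i = p for all i, i.e. P = (1 - pt)^22.  Cayley--Hamilton, applied to the integer
  matrices approximating u modulo l^n, then yields (u - p)^22 \<equiv> 0 modulo every l^n.\<close>

lemma dvd_prod_diff:
  fixes f g :: "'b \<Rightarrow> 'a::comm_ring_1"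
  assumes "finite S" "\<And>i. i \<in> S \<Longrightarrow> c dvd f i - g i"
  shows "c dvd prod f S - prod g S"
  using assms
proof (induction S rule: finite_induct)
  case (insert a F)
  have "prod f (insert a F) - prod g (insert a F) = f a * (prod f F - prod g F) + (f a - g a) * prod g F"
    using insert by (simp add: algebra_simps)
  then show ?case using insert by (simp add: dvd_add dvd_mult dvd_mult2)
qed simp

lemma dvd_det_diff:
  fixes A B :: "'a::comm_ring_1 mat"
  assumes A: "A \<in> carrier_mat n n" and B: "B \<in> carrier_mat n n"
    and entries: "\<And>i j. i < n \<Longrightarrow> j < n \<Longrightarrow> c dvd A $$ (i,j) - B $$ (i,j)"
  shows "c dvd det A - det B"
proof -
  have "c dvd signof \<pi> * (\<Prod>i = 0..<n. A $$ (i, \<pi> i)) - signof \<pi> * (\<Prod>i = 0..<n. B $$ (i, \<pi> i))"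
    if "\<pi> permutes {0..<n}" for \<pi>
  proof -
    have "c dvd (\<Prod>i = 0..<n. A $$ (i, \<pi> i)) - (\<Prod>i = 0..<n. B $$ (i, \<pi> i))"
      by (rule dvd_prod_diff) (use that entries permutes_in_image in auto)
    then show ?thesis by (metis dvd_mult right_diff_distrib)
  qed
  then show ?thesis
    unfolding det_def'[OF A] det_def'[OF B] sum_subtractf[symmetric] by (auto intro: dvd_sum)
qed

definition one_minus_t_mat :: "'a::comm_ring_1 mat \<Rightarrow> 'a poly mat" where
  "one_minus_t_mat A = 1\<^sub>m (dim_row A) - map_mat (\<lambda>a. [:0, a:]) A"

lemma one_minus_t_mat_carrier: "A \<in> carrier_mat n n \<Longrightarrow> one_minus_t_mat A \<in> carrier_mat n n"
  unfolding one_minus_t_mat_def by auto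

lemma one_minus_t_mat_index:
  "A \<in> carrier_mat n n \<Longrightarrow> i < n \<Longrightarrow> j < n \<Longrightarrow>
     one_minus_t_mat A $$ (i,j) = (if i = j then 1 else 0) - [:0, A $$ (i,j):]"
  unfolding one_minus_t_mat_def by auto

lemma det_one_minus_t_eq: "det_one_minus_t A = det (one_minus_t_mat A)"
  unfolding one_minus_t_mat_def det_one_minus_t_def ..

lemma coeff_0_det_one_minus_t:
  assumes A: "A \<in> carrier_mat n n"
  shows "coeff (det_one_minus_t A) 0 = 1"
proof -
  have "[:0,1:] dvd det (one_minus_t_mat A) - det (1\<^sub>m n)"
  proof (rule dvd_det_diff[OF one_minus_t_mat_carrier[OF A]])
    fix i j assume "i < n" "j < n"
    moreover have "[:0,1:] dvd [:0, - c:]" for c :: int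
      by (rule dvdI[of _ _ "[:-c:]"]) simp
    ultimately show "[:0,1:] dvd one_minus_t_mat A $$ (i,j) - 1\<^sub>m n $$ (i,j)"
      by (auto simp: one_minus_t_mat_index[OF A])
  qed auto
  then have "poly (det (one_minus_t_mat A) - 1) 0 = 0"
    by (simp add: dvd_iff_poly_eq_0)
  then show ?thesis by (simp add: det_one_minus_t_eq poly_0_coeff_0)
qed

lemma det_one_minus_t_cong:
  assumes A: "A \<in> carrier_mat n n" and B: "B \<in> carrier_mat n n" and AB: "mat_cong A B m"
  shows "[coeff (det_one_minus_t A) k = coeff (det_one_minus_t B) k] (mod m)"
proof -
  have "[:m:] dvd det (one_minus_t_mat A) - det (one_minus_t_mat B)"
  proof (rule dvd_det_diff[OF one_minus_t_mat_carrier[OF A] one_minus_t_mat_carrier[OF B]])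
    fix i j assume ij: "i < n" "j < n"
    then obtain c where c: "A $$ (i,j) - B $$ (i,j) = m * c"
      using AB A unfolding mat_cong_def cong_iff_dvd_diff by (auto elim!: dvdE)
    have "one_minus_t_mat A $$ (i,j) - one_minus_t_mat B $$ (i,j) = [:0, B $$ (i,j) - A $$ (i,j):]"
      using ij A B by (simp add: one_minus_t_mat_index)
    also have "\<dots> = [:m:] * [:0, - c:]" using c by (simp add: algebra_simps)
    finally show "[:m:] dvd one_minus_t_mat A $$ (i,j) - one_minus_t_mat B $$ (i,j)"
      by (simp only: dvd_triv_left)
  qed
  then show ?thesis
    by (simp add: det_one_minus_t_eq const_poly_dvd_iff cong_iff_dvd_diff flip: coeff_diff)
qed

lemma det_one_minus_t_one: "det_one_minus_t (1\<^sub>m n) = [:1, -1:] ^ n"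
proof -
  have "one_minus_t_mat (1\<^sub>m n :: int mat) = [:1, -1:] \<cdot>\<^sub>m 1\<^sub>m n"
    unfolding one_minus_t_mat_def by (rule eq_matI) (auto simp: one_pCons)
  then show ?thesis by (simp add: det_one_minus_t_eq det_smult)
qed

lemma coeff_1_linear_power: "coeff ([:1, a:] ^ n) 1 = of_nat n * a"
  by (induction n) (auto simp: mult_pCons_left algebra_simps coeff_0_power)

lemma coeff_1_det_one_minus_t_cong:
  assumes A: "A \<in> carrier_mat n n" and "mat_cong A (1\<^sub>m n) m"
  shows "[coeff (det_one_minus_t A) 1 = - int n] (mod m)"
  using det_one_minus_t_cong[OF A one_carrier_mat assms(2), of 1] coeff_1_linear_power[of "-1::int" n]
  by (simp add: det_one_minus_t_one)

text \<open>horner_mat n A c k is the Horner evaluation at A of \<Sum>j\<le>k. c j t^(k-j), the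
  reversal of \<Sum>j\<le>k. c j t^j.\<close>

fun horner_mat :: "nat \<Rightarrow> 'a::comm_ring_1 mat \<Rightarrow> (nat \<Rightarrow> 'a) \<Rightarrow> nat \<Rightarrow> 'a mat" where
  "horner_mat n A c 0 = c 0 \<cdot>\<^sub>m 1\<^sub>m n"
| "horner_mat n A c (Suc k) = horner_mat n A c k * A + c (Suc k) \<cdot>\<^sub>m 1\<^sub>m n"

lemma horner_mat_carrier: "A \<in> carrier_mat n n \<Longrightarrow> horner_mat n A c k \<in> carrier_mat n n"
  by (induction k) auto

definition coeff_mat :: "'a::zero poly mat \<Rightarrow> nat \<Rightarrow> 'a mat" where
  "coeff_mat X k = map_mat (\<lambda>q. coeff q k) X"

lemma coeff_mat_mult_t:
  fixes X :: "'a::comm_ring_1 poly mat"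
  assumes X: "X \<in> carrier_mat nr n" and A: "A \<in> carrier_mat n nc"
  shows "coeff_mat (X * map_mat (\<lambda>a. [:0, a:]) A) 0 = 0\<^sub>m nr nc"
    and "coeff_mat (X * map_mat (\<lambda>a. [:0, a:]) A) (Suc k) = coeff_mat X k * A"
proof -
  have shift: "q * [:0, a:] = pCons 0 (smult a q)" for q :: "'a poly" and a
    by (simp add: mult_pCons_right)
  show "coeff_mat (X * map_mat (\<lambda>a. [:0, a:]) A) 0 = 0\<^sub>m nr nc"
    using X A by (intro eq_matI) (auto simp: coeff_mat_def scalar_prod_def coeff_sum shift)
  show "coeff_mat (X * map_mat (\<lambda>a. [:0, a:]) A) (Suc k) = coeff_mat X k * A"
    using X A by (intro eq_matI) (auto simp: coeff_mat_def scalar_prod_def coeff_sum shift mult.commute)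
qed

lemma horner_mat_eq_coeff_mat:
  fixes A :: "'a::comm_ring_1 mat"
  assumes A: "A \<in> carrier_mat n n" and X: "X \<in> carrier_mat n n"
    and XM: "X * one_minus_t_mat A = q \<cdot>\<^sub>m 1\<^sub>m n"
  shows "horner_mat n A (coeff q) k = coeff_mat X k"
proof -
  define T where "T = X * map_mat (\<lambda>a. [:0, a:]) A"
  have T: "T \<in> carrier_mat n n" using X A by (simp add: T_def)
  have "X * one_minus_t_mat A = X - T"
    using X A unfolding one_minus_t_mat_def T_def
    by (subst mult_minus_distrib_mat[OF X]) auto
  then have "X = q \<cdot>\<^sub>m 1\<^sub>m n + T"
    using XM X T by (intro eq_matI) (auto simp: algebra_simps dest!: arg_cong[of _ _ "\<lambda>M. M $$ (_, _)"])
  then have rec: "coeff_mat X k = coeff q k \<cdot>\<^sub>m 1\<^sub>m n + coeff_mat T k" for k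
    using T by (intro eq_matI) (auto simp: coeff_mat_def)
  show ?thesis
  proof (induction k)
    case 0
    show ?case using rec[of 0] coeff_mat_mult_t(1)[OF X A] T_def by simp
  next
    case (Suc k)
    show ?case using rec[of "Suc k"] coeff_mat_mult_t(2)[OF X A] Suc T_def A X
      by (simp add: coeff_mat_def comm_add_mat[of _ n n])
  qed
qed

lemma degree_adj_mat_le:
  fixes M :: "'a::comm_ring_1 poly mat"
  assumes M: "M \<in> carrier_mat n n"
    and deg: "\<And>i j. i < n \<Longrightarrow> j < n \<Longrightarrow> degree (M $$ (i,j)) \<le> 1"
    and ij: "i < n" "j < n"
  shows "degree (adj_mat M $$ (i,j)) \<le> n - 1"
proof -
  have "degree (det (mat_delete M j i)) \<le> 1 * (n - 1)"
    using M deg by (intro degree_det_le mat_delete_carrier) (auto simp: mat_delete_def)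
  moreover have "degree ((-1 :: 'a poly) ^ (j + i)) = 0"
    using degree_power_le[of "-1 :: 'a poly" "j + i"] by simp
  ultimately show ?thesis
    using M ij degree_mult_le[of "(-1 :: 'a poly) ^ (j + i)" "det (mat_delete M j i)"]
    by (simp add: adj_mat_def cofactor_def)
qed

text \<open>Cayley--Hamilton, read off from det(1 - tA): the coefficients of det(1 - tA) in reverse
  order annihilate A.  The adjugate of 1 - tA has entries of degree < n, and comparing
  coefficients in adj(1 - tA) (1 - tA) = det(1 - tA) runs the Horner scheme.\<close>

theorem horner_mat_det_one_minus_t_eq_0:
  assumes A: "A \<in> carrier_mat n n"
  shows "horner_mat n A (coeff (det_one_minus_t A)) n = 0\<^sub>m n n"
proof -
  define M where "M = one_minus_t_mat A"
  have M: "M \<in> carrier_mat n n" unfolding M_def using one_minus_t_mat_carrier[OF A] .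
  have "horner_mat n A (coeff (det_one_minus_t A)) n = coeff_mat (adj_mat M) n"
    using A adj_mat[OF M] by (intro horner_mat_eq_coeff_mat) (simp_all add: M_def det_one_minus_t_eq)
  also have "\<dots> = 0\<^sub>m n n"
  proof (rule eq_matI)
    fix i j assume "i < dim_row (0\<^sub>m n n :: int mat)" "j < dim_col (0\<^sub>m n n :: int mat)"
    then have ij: "i < n" "j < n" by auto
    have "degree (M $$ (a,b)) \<le> 1" if "a < n" "b < n" for a b
      using that A by (simp add: M_def one_minus_t_mat_index degree_diff_le)
    then have "degree (adj_mat M $$ (i,j)) < n"
      using degree_adj_mat_le[OF M _ ij] ij by fastforce
    then show "coeff_mat (adj_mat M) n $$ (i,j) = 0\<^sub>m n n $$ (i,j)"
      using ij adj_mat(1)[OF M] by (simp add: coeff_mat_def coeff_eq_0)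
  qed (use adj_mat(1)[OF M] in \<open>auto simp: coeff_mat_def\<close>)
  finally show ?thesis .
qed

lemma smult_one_mat_mult:
  fixes B :: "'a::comm_ring_1 mat"
  shows "B \<in> carrier_mat n nc \<Longrightarrow> (c \<cdot>\<^sub>m 1\<^sub>m n) * B = c \<cdot>\<^sub>m B"
  by (simp add: mult_smult_assoc_mat[of _ n n])

lemma coeff_mult_linear:
  fixes q :: "'a::comm_ring_1 poly"
  shows "coeff (q * [:1, -a:]) 0 = coeff q 0"
    and "coeff (q * [:1, -a:]) (Suc k) = coeff q (Suc k) - a * coeff q k"
  by (simp_all add: mult_pCons_right)

lemma horner_mat_mult_linear:
  fixes A :: "'a::comm_ring_1 mat"
  assumes A: "A \<in> carrier_mat n n"
  shows "horner_mat n A (coeff (q * [:1, -a:])) (Suc k) =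
     horner_mat n A (coeff q) k * (A - a \<cdot>\<^sub>m 1\<^sub>m n) + coeff q (Suc k) \<cdot>\<^sub>m 1\<^sub>m n"
proof (induction k)
  case 0
  have B: "A - a \<cdot>\<^sub>m 1\<^sub>m n \<in> carrier_mat n n" using A by auto
  show ?case
    using A by (intro eq_matI) (auto simp: smult_one_mat_mult[OF A] smult_one_mat_mult[OF B]
        coeff_mult_linear(1) coeff_mult_linear(2)[of q a 0, simplified] algebra_simps)
next
  case (Suc k)
  define h where "h = horner_mat n A (coeff q) k"
  define B where "B = A - a \<cdot>\<^sub>m 1\<^sub>m n"
  have h: "h \<in> carrier_mat n n" unfolding h_def using horner_mat_carrier[OF A] .
  have B: "B \<in> carrier_mat n n" unfolding B_def using A by auto
  have "B * A = A * B"
    unfolding B_def using A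
    by (simp add: minus_mult_distrib_mat[of _ n n] mult_minus_distrib_mat[of _ n n]
        smult_one_mat_mult mult_smult_distrib[OF A one_carrier_mat])
  then have "h * B * A = h * A * B"
    using h A B by (simp add: assoc_mult_mat[of _ n n])
  then have AB: "(h * B + c \<cdot>\<^sub>m 1\<^sub>m n) * A = h * A * B + c \<cdot>\<^sub>m A"
    and BA: "(h * A + c \<cdot>\<^sub>m 1\<^sub>m n) * B = h * A * B + c \<cdot>\<^sub>m B" for c
    using h A B by (simp_all add: add_mult_distrib_mat[of _ n n] smult_one_mat_mult)
  have "horner_mat n A (coeff (q * [:1, -a:])) (Suc (Suc k)) =
      (h * B + coeff q (Suc k) \<cdot>\<^sub>m 1\<^sub>m n) * A
        + (coeff q (Suc (Suc k)) - a * coeff q (Suc k)) \<cdot>\<^sub>m 1\<^sub>m n"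
    by (simp only: horner_mat.simps(2)[of _ _ _ "Suc k"] Suc h_def B_def coeff_mult_linear)
  also have "\<dots> = (h * A + coeff q (Suc k) \<cdot>\<^sub>m 1\<^sub>m n) * B + coeff q (Suc (Suc k)) \<cdot>\<^sub>m 1\<^sub>m n"
    unfolding AB BA using h A B by (intro eq_matI) (auto simp: B_def algebra_simps)
  finally show ?case by (simp only: horner_mat.simps h_def B_def)
qed

lemma horner_mat_linear_power:
  fixes A :: "'a::comm_ring_1 mat"
  assumes A: "A \<in> carrier_mat n n"
  shows "horner_mat n A (coeff ([:1, -a:] ^ k)) k = (A - a \<cdot>\<^sub>m 1\<^sub>m n) ^\<^sub>m k"
proof (induction k)
  case 0
  show ?case by (auto intro!: eq_matI)
next
  case (Suc k)
  have "degree ([:1, -a:] ^ k) \<le> degree [:1, -a:] * k" by (rule degree_power_le)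
  also have "\<dots> \<le> k" by auto
  finally have vanish: "coeff ([:1, -a:] ^ k) (Suc k) = 0" by (simp add: coeff_eq_0)
  have "horner_mat n A (coeff ([:1, -a:] ^ Suc k)) (Suc k)
      = horner_mat n A (coeff ([:1, -a:] ^ k)) k * (A - a \<cdot>\<^sub>m 1\<^sub>m n) + 0 \<cdot>\<^sub>m 1\<^sub>m n"
    by (simp only: power_Suc2 horner_mat_mult_linear[OF A] vanish)
  also have "\<dots> = (A - a \<cdot>\<^sub>m 1\<^sub>m n) ^\<^sub>m Suc k"
    using Suc A by (intro eq_matI) auto
  finally show ?case .
qed

lemma mat_cong_refl: "mat_cong A A m"
  unfolding mat_cong_def by simp

lemma mat_cong_add:
  "A \<in> carrier_mat nr nc \<Longrightarrow> A' \<in> carrier_mat nr nc \<Longrightarrow> B \<in> carrier_mat nr nc \<Longrightarrow> B' \<in> carrier_mat nr nc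
   \<Longrightarrow> mat_cong A A' m \<Longrightarrow> mat_cong B B' m
   \<Longrightarrow> mat_cong (A + B) (A' + B') m"
  unfolding mat_cong_def by (auto intro: cong_add)

lemma mat_cong_mult:
  "A \<in> carrier_mat nr n \<Longrightarrow> A' \<in> carrier_mat nr n \<Longrightarrow> B \<in> carrier_mat n nc \<Longrightarrow> B' \<in> carrier_mat n nc
   \<Longrightarrow> mat_cong A A' m \<Longrightarrow> mat_cong B B' m \<Longrightarrow> mat_cong (A * B) (A' * B') m"
  unfolding mat_cong_def by (auto simp: scalar_prod_def intro!: cong_sum cong_mult)

lemma mat_cong_smult_one: "[a = b] (mod m) \<Longrightarrow> mat_cong (a \<cdot>\<^sub>m 1\<^sub>m n) (b \<cdot>\<^sub>m 1\<^sub>m n) m"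
  unfolding mat_cong_def by (auto intro: cong_mult)

lemma horner_mat_cong:
  assumes A: "A \<in> carrier_mat n n" and A': "A' \<in> carrier_mat n n" and AA': "mat_cong A A' m"
    and cc': "\<And>j. j \<le> k \<Longrightarrow> [c j = c' j] (mod m)"
  shows "mat_cong (horner_mat n A c k) (horner_mat n A' c' k) m"
  using cc'
proof (induction k)
  case (Suc k)
  then show ?case
    using A A' AA' horner_mat_carrier[OF A] horner_mat_carrier[OF A']
    by (auto intro!: mat_cong_add[of _ n n] mat_cong_mult[of _ n n] mat_cong_smult_one
        mult_carrier_mat[of _ n n])
qed (simp add: mat_cong_smult_one)

lemma mat_cong_power_zero_if_det_one_minus_t_cong:
  assumes A: "A \<in> carrier_mat n n"
    and cong: "\<And>k. k \<le> n \<Longrightarrow> [coeff (det_one_minus_t A) k = coeff ([:1, - a:] ^ n) k] (mod m)"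
  shows "mat_cong ((A - a \<cdot>\<^sub>m 1\<^sub>m n) ^\<^sub>m n) (0\<^sub>m n n) m"
proof -
  have "mat_cong (horner_mat n A (coeff ([:1, - a:] ^ n)) n)
      (horner_mat n A (coeff (det_one_minus_t A)) n) m"
    by (rule horner_mat_cong[OF A A mat_cong_refl]) (use cong in \<open>metis cong_sym\<close>)
  then show ?thesis
    by (simp only: horner_mat_linear_power[OF A] horner_mat_det_one_minus_t_eq_0[OF A])
qed

lemma coeff_recip_poly: "coeff (recip_poly n P) j = (if j \<le> n then coeff P (n - j) else 0)"
proof -
  have "coeff (recip_poly n P) j = (\<Sum>k\<le>n. if n - k = j then coeff P k else 0)"
    unfolding recip_poly_def coeff_sum coeff_monom by simp
  also have "\<dots> = (\<Sum>k\<in>(if j \<le> n then {n - j} else {}). coeff P k)"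
    by (rule sum.mono_neutral_cong_right) (auto split: if_splits)
  finally show ?thesis by simp
qed

lemma recip_poly_factors:
  assumes "coeff P 0 = 1"
  obtains r where "map_poly of_int (recip_poly n P) = (\<Prod>i<n. [:- r i, 1:] :: complex poly)"
proof -
  define Q where "Q = (map_poly of_int (recip_poly n P) :: complex poly)"
  have coeff_Q: "coeff Q j = of_int (if j \<le> n then coeff P (n - j) else 0)" for j
    by (simp add: Q_def coeff_map_poly coeff_recip_poly)
  have "degree Q = n"
    using assms by (intro order_antisym degree_le le_degree) (auto simp: coeff_Q)
  moreover have "lead_coeff Q = 1"
    using assms \<open>degree Q = n\<close> by (simp add: coeff_Q)
  moreover obtain r where "smult (lead_coeff Q) (\<Prod>i<degree Q. [:- r i, 1:]) = Q"
    using complex_poly_decompose' by blast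
  ultimately have "map_poly of_int (recip_poly n P) = (\<Prod>i<n. [:- r i, 1:])"
    by (simp add: Q_def)
  then show ?thesis by (rule that)
qed

lemma coeff_prod_linear_factors_eq_neg_sum:
  fixes r :: "nat \<Rightarrow> 'a::comm_ring_1"
  shows "coeff (\<Prod>i<Suc n. [:- r i, 1:]) n = - (\<Sum>i<Suc n. r i)"
proof -
  have degree: "degree (\<Prod>i<n. [:- r i, 1:]) \<le> n" for n
    using degree_prod_sum_le[of "{..<n}" "\<lambda>i. [:- r i, 1:]"] by simp
  have step: "coeff (q * [:- a, 1:]) (Suc k) = coeff q k - a * coeff q (Suc k)" for q :: "'a poly" and a k
    by (simp add: mult_pCons_right)
  have vanish: "coeff (\<Prod>i<n. [:- r i, 1:]) (Suc n) = 0" for n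
    using degree[of n] by (simp add: coeff_eq_0)
  have monic: "coeff (\<Prod>i<n. [:- r i, 1:]) n = 1" for n
    by (induction n) (simp_all add: step vanish)
  show ?thesis
  proof (induction n)
    case (Suc n)
    then show ?case
      using monic[of "Suc n"] by (simp only: prod.lessThan_Suc[of _ "Suc n"] sum.lessThan_Suc[of _ "Suc n"] step) simp
  qed simp
qed

lemma sum_eq_card_bound_imp_eq:
  fixes z :: "'i \<Rightarrow> complex"
  assumes S: "finite S" and bound: "\<And>i. i \<in> S \<Longrightarrow> cmod (z i) \<le> R"
    and sum: "(\<Sum>i\<in>S. z i) = of_nat (card S) * of_real R" and i: "i \<in> S"
  shows "z i = of_real R"
proof -
  have "(\<Sum>j\<in>S. R - Re (z j)) = 0"
    using arg_cong[OF sum, of Re] by (simp add: sum_subtractf Re_sum)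
  moreover have "\<forall>j\<in>S. 0 \<le> R - Re (z j)"
    using bound complex_Re_le_cmod order.trans by fastforce
  ultimately have Re: "Re (z i) = R"
    using i by (simp add: sum_nonneg_eq_0_iff[OF S])
  have "(Re (z i))\<^sup>2 + (Im (z i))\<^sup>2 = (cmod (z i))\<^sup>2" by (simp add: cmod_power2)
  also have "\<dots> \<le> R\<^sup>2" using bound[OF i] by (simp add: power_mono)
  finally have "Im (z i) = 0" using Re by simp
  then show ?thesis using Re by (simp add: complex_eq_iff)
qed

lemma cong_abs_bounded_imp_eq:
  fixes a b :: int
  assumes "\<bar>a\<bar> \<le> N" "\<bar>b\<bar> \<le> N" "2 * N < m" "[a = b] (mod m)"
  shows "a = b"
proof -
  have "[a + N = b + N] (mod m)" using assms(4) by (rule cong_add) simp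
  then have "a + N = b + N"
    using assms(1-3) by (intro cong_less_imp_eq_int) auto
  then show ?thesis by simp
qed

lemma cong_all_powers_imp_eq:
  fixes a b :: int
  assumes l: "l \<ge> 2" and cong: "\<And>n. [a = b] (mod int l ^ n)"
  shows "a = b"
proof (rule ccontr)
  assume "a \<noteq> b"
  define n where "n = nat \<bar>a - b\<bar>"
  have "n < 2 ^ n" by (rule less_exp)
  also have "(2::nat) ^ n \<le> l ^ n" using l by (rule power_mono) simp
  finally have "int n < int l ^ n" by (metis of_nat_less_iff of_nat_power)
  moreover have "int l ^ n \<le> \<bar>a - b\<bar>"
    using cong[of n] \<open>a \<noteq> b\<close> dvd_imp_le_int[of "a - b" "int l ^ n"]
    by (simp add: cong_iff_dvd_diff)
  ultimately show False by (simp add: n_def)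
qed

lemma coeff_eq_if_recip_poly_eq_linear_power:
  fixes P :: "int poly"
  assumes recip: "recip_poly n P = [:- a, 1:] ^ n" and k: "k \<le> n"
  shows "coeff P k = coeff ([:1, - a:] ^ n) k"
proof -
  have "reflect_poly [:- a, 1:] = [:1, - a:]"
    by (rule poly_eqI) (simp add: coeff_reflect_poly coeff_pCons split: nat.split)
  then have "[:1, - a:] ^ n = reflect_poly ([:- a, 1:] ^ n)"
    by (simp add: reflect_poly_power)
  then have "coeff ([:1, - a:] ^ n) k = coeff ([:- a, 1:] ^ n) (n - k)"
    using k by (simp add: coeff_reflect_poly degree_linear_power)
  also have "\<dots> = coeff P k"
    using k by (simp add: coeff_recip_poly flip: recip)
  finally show ?thesis ..
qed

text \<open>Up to sign, coeff P 1 is the sum of the roots of recip_poly n P.  It is a multiple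
  p c of p with |c| \<le> n (all roots have modulus p) and c \<equiv> -n (mod l) (as p \<equiv> 1), so
  c = -n once l > 2 n; the roots then sum to n p, which forces each of them to be p.\<close>

lemma recip_poly_eq_linear_power:
  fixes l p n :: nat and P :: "int poly"
  assumes n: "n > 0" and l: "2 * n < l" and p: "p > 0" "[int p = 1] (mod int l)"
    and b0: "coeff P 0 = 1" and b1: "[coeff P 1 = - int n] (mod int l)"
    and p_dvd: "int p dvd coeff P 1"
    and roots: "\<forall>z::complex. poly (map_poly of_int (recip_poly n P)) z = 0 \<longrightarrow> cmod z = real p"
  shows "recip_poly n P = [:- int p, 1:] ^ n"
proof -
  obtain r where r: "map_poly of_int (recip_poly n P) = (\<Prod>i<n. [:- r i, 1:] :: complex poly)"
    using recip_poly_factors[OF b0] .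
  have norm_r: "cmod (r i) = real p" if "i < n" for i
    using roots that by (auto simp: r poly_prod)
  obtain m where m: "n = Suc m" using n by (cases n) auto
  have "- (\<Sum>i<n. r i) = coeff (map_poly of_int (recip_poly n P)) m"
    unfolding r unfolding m by (simp only: coeff_prod_linear_factors_eq_neg_sum)
  also have "\<dots> = of_int (coeff P 1)"
    by (simp add: coeff_map_poly coeff_recip_poly m)
  finally have sum_r: "(\<Sum>i<n. r i) = - of_int (coeff P 1)"
    by (metis minus_minus)
  obtain c where c: "coeff P 1 = int p * c" using p_dvd by blast
  have "real p * \<bar>c\<bar> = cmod (\<Sum>i<n. r i)"
    unfolding sum_r c by (simp add: norm_mult)
  also have "\<dots> \<le> (\<Sum>i<n. cmod (r i))" by (rule norm_sum)
  also have "\<dots> = real p * n" by (simp add: norm_r)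
  finally have "\<bar>c\<bar> \<le> int n" using p by simp
  moreover have "[int p * c = 1 * c] (mod int l)"
    by (rule cong_mult[OF p(2) cong_refl])
  then have "[c = - int n] (mod int l)"
    using b1 unfolding c by (metis cong_sym cong_trans mult_1)
  ultimately have "c = - int n"
    using l by (intro cong_abs_bounded_imp_eq[of _ "int n"]) auto
  then have "(\<Sum>i<n. r i) = of_nat (card {..<n}) * of_real (real p)"
    unfolding sum_r c by simp
  then have "r i = of_nat p" if "i < n" for i
    using sum_eq_card_bound_imp_eq[of "{..<n}" r "real p"] norm_r that by simp
  then have "map_poly of_int (recip_poly n P) = (map_poly of_int ([:- int p, 1:] ^ n) :: complex poly)"
    by (simp add: r of_int_poly_hom.hom_power)
  then show ?thesis by simp
qed

theorem lemma3p3: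
  fixes l p :: nat and U :: "nat \<Rightarrow> int mat" and P :: "int poly"
  assumes l_prime: "prime l" and l_gt: "l > 44" and p_prime: "prime p"
    and U_zl: "zl_matrix l 22 U"
    and i: "l dvd p - 1"
    and ii: "mat_cong (U 1) (1\<^sub>m 22) (int l)"
    and iii: "\<forall>n k. [coeff (det_one_minus_t (U n)) k = coeff P k] (mod (int l ^ n))"
    and iv: "\<forall>z::complex. poly (map_poly of_int (recip_poly 22 P)) z = 0 \<longrightarrow> cmod z = real p"
    and v: "int p dvd coeff P 1"
  shows "\<exists>m. \<forall>n. mat_cong ((U n - of_nat p \<cdot>\<^sub>m 1\<^sub>m 22) ^\<^sub>m m) (0\<^sub>m 22 22) (int l ^ n)"
proof -
  have U: "U n \<in> carrier_mat 22 22" for n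
    using U_zl by (simp add: zl_matrix_def)
  have p: "p > 0" using p_prime by (simp add: prime_gt_0_nat)
  have "[coeff P 0 = 1] (mod int l ^ n)" for n
    using iii[rule_format, of n 0] coeff_0_det_one_minus_t[OF U] by (simp add: cong_sym_eq)
  then have b0: "coeff P 0 = 1"
    using l_gt by (intro cong_all_powers_imp_eq[of l]) auto
  have "[coeff (det_one_minus_t (U 1)) 1 = coeff P 1] (mod int l)"
    using iii[rule_format, of 1 1] by simp
  then have b1: "[coeff P 1 = - 22] (mod int l)"
    using cong_trans[OF cong_sym coeff_1_det_one_minus_t_cong[OF U ii]] by simp
  have "int l dvd int (p - 1)"
    using i by simp
  then have "[int p = 1] (mod int l)"
    using p by (simp add: cong_iff_dvd_diff of_nat_diff)
  then have "recip_poly 22 P = [:- int p, 1:] ^ 22"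
    using l_gt b1 by (intro recip_poly_eq_linear_power[OF _ _ p _ b0 _ v iv]) simp_all
  then have coeff_P: "coeff P k = coeff ([:1, - int p:] ^ 22) k" if "k \<le> 22" for k
    using that by (rule coeff_eq_if_recip_poly_eq_linear_power)
  show ?thesis
  proof (intro exI allI)
    fix n
    show "mat_cong ((U n - of_nat p \<cdot>\<^sub>m 1\<^sub>m 22) ^\<^sub>m 22) (0\<^sub>m 22 22) (int l ^ n)"
      using iii coeff_P by (intro mat_cong_power_zero_if_det_one_minus_t_cong[OF U]) metis
  qed
qed

end
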